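(* For any $\delta>0$ and $n\ge\lambda\ge 14\log\frac{4}{\delta}$, the algorithm $C_\lambda$ is $(\varepsilon,\delta)$-differentially private where \[ \varepsilon=\sqrt{\frac{32\log\frac{4}{\delta}}{\lambda-\sqrt{2\lambda\log\frac{2}{\delta}}}}\cdot\left(1-\frac{\lambda-\sqrt{2\lambda\log\frac{2}{\delta}}}{n}\right). \]
   Context: The algorithm $C_\lambda$ on input $(x_1,\dots,x_n)\in\{0,1\}^n$: sample $s\sim\mathrm{Bin}(n,\lambda/n)$; choose $H$ uniformly at random among subsets of $[n]$ of size $s$; output $\sum_{i\notin H}x_i+B$ where $B\sim\mathrm{Bin}(s,1/2)$ is independent. An algorithm $M$ on $\{0,1\}^n$ is $(\varepsilon,\delta)$-differentially private if for all $X,X'$ differing in one coordinate and every set $W$ of outputs, $\Pr[M(X)\in W]\le e^{\varepsilon}\Pr[M(X')\in W]+\delta$. $\log$ is the natural logarithm. *)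

theory Defs
  imports "HOL-Probability.Probability"
begin

definition C_alg :: "real \<Rightarrow> nat \<Rightarrow> bool list \<Rightarrow> nat pmf" where
  "C_alg lam n xs =
     do {
       s \<leftarrow> binomial_pmf n (lam / real n);
       H \<leftarrow> pmf_of_set {H. H \<subseteq> {..<n} \<and> card H = s};
       B \<leftarrow> binomial_pmf s (1/2);
       return_pmf ((\<Sum>i\<in>{..<n} - H. (if xs ! i then 1 else 0)) + B)
     }"

definition neighbours :: "nat \<Rightarrow> bool list \<Rightarrow> bool list \<Rightarrow> bool" where
  "neighbours n xs ys \<longleftrightarrow> length xs = n \<and> length ys = n \<and>
     card {i. i < n \<and> xs ! i \<noteq> ys ! i} = 1"

definition differentially_private ::
    "nat \<Rightarrow> (bool list \<Rightarrow> 'b pmf) \<Rightarrow> real \<Rightarrow> real \<Rightarrow> bool" where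
  "differentially_private n M eps del \<longleftrightarrow>
     (\<forall>xs ys W. neighbours n xs ys \<longrightarrow>
        measure_pmf.prob (M xs) W \<le> exp eps * measure_pmf.prob (M ys) W + del)"

end

theory Submission
  imports Defs "HOL-Analysis.Harmonic_Numbers"
begin

(* Fix the coordinate j in which the neighbouring inputs differ and condition on the set of hidden
   coordinates other than j: it is a p-random subset of some size h, where p = lam / n.  Given it, the
   output is Z + Bin(h,1/2) plus x_j if j is visible and plus a fair coin if j is hidden, so the two
   neighbours induce the mixtures with weights (1 - p/2, p/2) and (p/2, 1 - p/2) of the laws of
   Z + Bin(h,1/2) and Z + 1 + Bin(h,1/2).  Near its centre the pmf of Bin(h,1/2) changes by at most
   the factor E = 1 + eta + eta^2/2 between neighbouring points, where eta = sqrt (32 L / m),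
   L = ln (4 / delta) and m = lam - sqrt (2 lam ln (2 / delta)).  Hence for h >= 16/25 m the two laws
   are E-close up to a Hoeffding tail delta/4, and mixing improves E to
   F = 1 + (1 - p) eta + ((1 - p) eta)^2/2 <= exp eps.  The event h < 16/25 m is a lower tail of
   Bin(n - 1, p), again of probability at most delta/4. *)

lemma measure_bind_pmf_finite:
  assumes "finite S" "set_pmf M \<subseteq> S"
  shows "measure_pmf.prob (bind_pmf M N) X = (\<Sum>a\<in>S. pmf M a * measure_pmf.prob (N a) X)"
proof -
  have "measure_pmf.prob (bind_pmf M N) X = measure_pmf.expectation M (\<lambda>a. measure_pmf.prob (N a) X)"
    unfolding measure_pmf_bind
    by (rule measure_pmf.measure_bind[where N = "count_space UNIV"]) (auto simp: measure_pmf_in_subprob_algebra)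
  also have "\<dots> = (\<Sum>a\<in>S. pmf M a * measure_pmf.prob (N a) X)"
    using assms by (subst integral_measure_pmf[OF assms(1)]) auto
  finally show ?thesis .
qed

lemma measure_bind_pmf_of_set:
  assumes "finite S" "S \<noteq> {}"
  shows "measure_pmf.prob (pmf_of_set S \<bind> N) X = (\<Sum>a\<in>S. measure_pmf.prob (N a) X) / card S"
  using measure_bind_pmf_finite[of S "pmf_of_set S" N X] assms by (simp add: sum_divide_distrib)

lemma measure_binomial_pmf_eq_sum:
  assumes "q \<in> {0..1}"
  shows "measure_pmf.prob (binomial_pmf h q) V = (\<Sum>u\<in>V \<inter> {..h}. pmf (binomial_pmf h q) u)"
proof -
  have "measure_pmf.prob (binomial_pmf h q) V = measure_pmf.prob (binomial_pmf h q) (V \<inter> {..h})"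
    using assms by (intro measure_prob_cong_0) auto
  then show ?thesis
    by (simp add: measure_measure_pmf_finite)
qed

lemma measure_binomial_pmf_Suc:
  assumes "q \<in> {0..1}"
  shows "measure_pmf.prob (binomial_pmf (Suc h) q) V =
           (1 - q) * measure_pmf.prob (binomial_pmf h q) V
           + q * measure_pmf.prob (binomial_pmf h q) {u. Suc u \<in> V}"
proof -
  have "measure_pmf.prob (binomial_pmf (Suc h) q) V =
      (\<Sum>b\<in>UNIV. pmf (bernoulli_pmf q) b *
         measure_pmf.prob (map_pmf (\<lambda>k. (if b then 1 else 0) + k) (binomial_pmf h q)) V)"
    unfolding binomial_pmf_Suc[OF assms] map_pmf_def[symmetric]
    by (rule measure_bind_pmf_finite) auto
  then show ?thesis
    using assms by (simp add: UNIV_bool vimage_def)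
qed

lemma map_pmf_binomial_reflect:
  assumes "q \<in> {0..1}"
  shows "map_pmf (\<lambda>k. h - k) (binomial_pmf h q) = binomial_pmf h (1 - q)"
proof (rule pmf_eqI)
  fix k
  show "pmf (map_pmf (\<lambda>k. h - k) (binomial_pmf h q)) k = pmf (binomial_pmf h (1 - q)) k"
  proof (cases "k \<le> h")
    case True
    have "measure_pmf.prob (binomial_pmf h q) ((\<lambda>k. h - k) -` {k})
          = measure_pmf.prob (binomial_pmf h q) {h - k}"
      using True assms by (intro measure_prob_cong_0) auto
    then show ?thesis
      using True assms by (simp add: pmf_map measure_pmf_single binomial_symmetric[OF True, symmetric])
  next
    case False
    then have "(\<lambda>k. h - k) -` {k} = {}" by auto
    then show ?thesis
      using False assms by (simp add: pmf_map)
  qed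
qed

lemma measure_binomial_pmf_reflect:
  assumes "q \<in> {0..1}"
  shows "measure_pmf.prob (binomial_pmf h q) X =
           measure_pmf.prob (binomial_pmf h (1 - q)) {u. u \<le> h \<and> h - u \<in> X}"
proof -
  have "measure_pmf.prob (binomial_pmf h (1 - q)) {u. u \<le> h \<and> h - u \<in> X}
        = measure_pmf.prob (binomial_pmf h (1 - q)) ((\<lambda>k. h - k) -` X)"
    using assms by (intro measure_prob_cong_0) auto
  also have "\<dots> = measure_pmf.prob (map_pmf (\<lambda>k. h - k) (binomial_pmf h (1 - q))) X"
    by simp
  also have "map_pmf (\<lambda>k. h - k) (binomial_pmf h (1 - q)) = binomial_pmf h q"
    using map_pmf_binomial_reflect[of "1 - q" h] assms by simp
  finally show ?thesis ..
qed

lemma pmf_binomial_Suc_ratio: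
  assumes "q \<in> {0..1}" "v < h"
  shows "pmf (binomial_pmf h q) (Suc v) * (real (Suc v) * (1 - q))
         = pmf (binomial_pmf h q) v * (real (h - v) * q)"
proof -
  have choose: "real (Suc v) * real (h choose Suc v) = real (h - v) * real (h choose v)"
    using binomial_absorption[of v h] binomial_absorb_comp[of h v] of_nat_mult by metis
  have "h - v = Suc (h - Suc v)"
    using assms(2) by simp
  then have powers: "q ^ Suc v * (1 - q) ^ (h - Suc v) * (1 - q) = q ^ v * (1 - q) ^ (h - v) * q"
    by simp
  have "pmf (binomial_pmf h q) (Suc v) * (real (Suc v) * (1 - q))
        = (real (Suc v) * real (h choose Suc v)) * (q ^ Suc v * (1 - q) ^ (h - Suc v) * (1 - q))"
    using assms(1) by (simp add: mult_ac)
  also have "\<dots> = (real (h - v) * real (h choose v)) * (q ^ v * (1 - q) ^ (h - v) * q)"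
    by (simp only: choose powers)
  also have "\<dots> = pmf (binomial_pmf h q) v * (real (h - v) * q)"
    using assms(1) by (simp add: mult_ac)
  finally show ?thesis .
qed

lemma pmf_binomial_half_Suc_le:
  assumes v: "Suc v \<le> h" and E: "0 \<le> E" and window: "real h + 1 \<le> (1 + E) * real (Suc v)"
  shows "pmf (binomial_pmf h (1/2)) (Suc v) \<le> E * pmf (binomial_pmf h (1/2)) v"
proof -
  define b where "b = pmf (binomial_pmf h (1/2))"
  have "b (Suc v) * real (Suc v) = b v * real (h - v)"
    using pmf_binomial_Suc_ratio[of "1/2" v h] v unfolding b_def by (simp del: pmf_binomial)
  also have "\<dots> \<le> b v * (E * real (Suc v))"
    using v window by (intro mult_left_mono) (simp_all add: b_def algebra_simps)
  finally show ?thesis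
    by (simp add: b_def mult_ac)
qed

lemma measure_binomial_half_le_shift:
  assumes h: "0 < h" and E: "0 \<le> E" and \<epsilon>: "0 \<le> \<epsilon>"
    and window: "real h + 1 \<le> (1 + E) * (real h / 2 - \<epsilon>)"
  shows "measure_pmf.prob (binomial_pmf h (1/2)) V
           \<le> E * measure_pmf.prob (binomial_pmf h (1/2)) {u. Suc u \<in> V} + exp (- 2 * \<epsilon>\<^sup>2 / real h)"
proof -
  define b where "b = pmf (binomial_pmf h (1/2))"
  define G where "G = {u \<in> V \<inter> {..h}. real h / 2 - \<epsilon> < real u}"
  have "0 < (1 + E) * (real h / 2 - \<epsilon>)"
    using window by linarith
  then have "0 \<notin> G"
    using E by (simp add: G_def zero_less_mult_iff)
  then have G: "G = Suc ` {v. Suc v \<in> G}"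
    by (auto simp: image_iff) (metis not0_implies_Suc)
  have "measure_pmf.prob (binomial_pmf h (1/2)) V = sum b (V \<inter> {..h})"
    unfolding b_def by (rule measure_binomial_pmf_eq_sum) simp
  also have "\<dots> = sum b (V \<inter> {..h} - G) + sum b G"
    by (rule sum.subset_diff) (auto simp: G_def)
  finally have split: "measure_pmf.prob (binomial_pmf h (1/2)) V = sum b (V \<inter> {..h} - G) + sum b G" .
  have "sum b (V \<inter> {..h} - G) \<le> exp (- 2 * \<epsilon>\<^sup>2 / real h)"
  proof -
    have "sum b (V \<inter> {..h} - G) \<le> sum b ({u. real u \<le> real h * (1/2) - \<epsilon>} \<inter> {..h})"
      by (rule sum_mono2) (auto simp: G_def b_def)
    also have "\<dots> = measure_pmf.prob (binomial_pmf h (1/2)) {u. real u \<le> real h * (1/2) - \<epsilon>}"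
      unfolding b_def by (rule measure_binomial_pmf_eq_sum[symmetric]) simp
    also have "\<dots> \<le> exp (- 2 * \<epsilon>\<^sup>2 / real h)"
      using binomial_distribution.prob_le[of "1/2" h \<epsilon>] \<epsilon> h by (simp add: binomial_distribution_def)
    finally show ?thesis .
  qed
  moreover have "sum b G \<le> E * measure_pmf.prob (binomial_pmf h (1/2)) {u. Suc u \<in> V}"
  proof -
    have "sum b G = sum (b \<circ> Suc) {v. Suc v \<in> G}"
      using G by (metis inj_Suc sum.reindex)
    also have "\<dots> \<le> sum (\<lambda>v. E * b v) {v. Suc v \<in> G}"
    proof (intro sum_mono)
      fix v assume "v \<in> {v. Suc v \<in> G}"
      then have v: "Suc v \<le> h" "real h / 2 - \<epsilon> < real (Suc v)"
        by (auto simp: G_def)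
      then have "real h + 1 \<le> (1 + E) * real (Suc v)"
        using window mult_strict_left_mono[OF v(2), of "1 + E"] E by linarith
      then show "(b \<circ> Suc) v \<le> E * b v"
        using pmf_binomial_half_Suc_le[OF v(1) E] by (simp add: b_def)
    qed
    also have "\<dots> \<le> E * sum b ({u. Suc u \<in> V} \<inter> {..h})"
      unfolding sum_distrib_left[symmetric] using E
      by (intro mult_left_mono sum_mono2) (auto simp: G_def b_def)
    also have "\<dots> = E * measure_pmf.prob (binomial_pmf h (1/2)) {u. Suc u \<in> V}"
      unfolding b_def by (subst measure_binomial_pmf_eq_sum) simp_all
    finally show ?thesis .
  qed
  ultimately show ?thesis
    using split by linarith
qed

lemma measure_binomial_half_shift_le:
  assumes "0 < h" "0 \<le> E" "0 \<le> \<epsilon>"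
    and "real h + 1 \<le> (1 + E) * (real h / 2 - \<epsilon>)"
  shows "measure_pmf.prob (binomial_pmf h (1/2)) {u. Suc u \<in> V}
           \<le> E * measure_pmf.prob (binomial_pmf h (1/2)) V + exp (- 2 * \<epsilon>\<^sup>2 / real h)"
proof -
  \<comment> \<open>The reflection u \<mapsto> h - u preserves Bin(h,1/2) and turns the shift by +1 into one by -1.\<close>
  let ?B = "binomial_pmf h (1/2)"
  have reflect: "measure_pmf.prob ?B X = measure_pmf.prob ?B {u. u \<le> h \<and> h - u \<in> X}" for X
    using measure_binomial_pmf_reflect[of "1/2" h X] by simp
  define V' where "V' = {u. u \<le> h \<and> Suc (h - u) \<in> V}"
  have "measure_pmf.prob ?B {u. Suc u \<in> V} = measure_pmf.prob ?B V'"
    unfolding reflect[of "{u. Suc u \<in> V}"] V'_def by simp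
  also have "\<dots> \<le> E * measure_pmf.prob ?B {u. Suc u \<in> V'} + exp (- 2 * \<epsilon>\<^sup>2 / real h)"
    by (rule measure_binomial_half_le_shift[OF assms])
  also have "measure_pmf.prob ?B {u. Suc u \<in> V'} \<le> measure_pmf.prob ?B V"
    unfolding reflect[of V] V'_def
    by (intro measure_pmf.finite_measure_mono) (auto simp: Suc_diff_Suc)
  finally show ?thesis
    using assms(2) by (smt (verit) mult_left_mono)
qed

lemma measure_binomial_pmf_lower_tail:
  assumes p: "p \<in> {0..1}" and t: "0 \<le> t"
  shows "measure_pmf.prob (binomial_pmf N p) {k. real k < t} \<le> exp (t / 2 - real N * p / 3)"
proof -
  \<comment> \<open>Chernoff: bound the indicator of k < t by (3/2) powr (t - k) and sum against the pmf.\<close>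
  let ?b = "\<lambda>k. (3/2::real) powr t / (3/2) ^ k"
  have one_le: "1 \<le> ?b k" if "real k < t" for k
  proof -
    have "?b k = (3/2) powr (t - real k)"
      by (simp add: powr_diff powr_realpow)
    then show ?thesis
      using that by (simp add: ge_one_powr_ge_zero)
  qed
  have "measure_pmf.prob (binomial_pmf N p) {k. real k < t}
        = (\<Sum>k\<in>{k. real k < t} \<inter> {..N}. pmf (binomial_pmf N p) k)"
    by (rule measure_binomial_pmf_eq_sum[OF p])
  also have "\<dots> \<le> (\<Sum>k\<in>{k. real k < t} \<inter> {..N}. pmf (binomial_pmf N p) k * ?b k)"
  proof (intro sum_mono)
    fix k assume "k \<in> {k. real k < t} \<inter> {..N}"
    then show "pmf (binomial_pmf N p) k \<le> pmf (binomial_pmf N p) k * ?b k"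
      using mult_left_mono[OF one_le, of k "pmf (binomial_pmf N p) k"] by simp
  qed
  also have "\<dots> \<le> (\<Sum>k\<le>N. pmf (binomial_pmf N p) k * ?b k)"
    by (intro sum_mono2) auto
  also have "\<dots> = (3/2) powr t * (\<Sum>k\<le>N. real (N choose k) * (p / (3/2)) ^ k * (1 - p) ^ (N - k))"
    using p by (simp add: sum_distrib_left field_simps)
  also have "\<dots> = (3/2) powr t * (1 - p / 3) ^ N"
    by (subst binomial_ring[symmetric]) simp
  also have "\<dots> \<le> exp (t / 2) * exp (- p / 3) ^ N"
  proof (intro mult_mono power_mono)
    have "ln (3/2::real) \<le> 1/2"
      using ln_le_minus_one[of "3/2::real"] by simp
    then show "(3/2::real) powr t \<le> exp (t / 2)"
      using t mult_left_mono[of "ln (3/2)" "1/2" t] by (simp add: powr_def)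
    show "1 - p / 3 \<le> exp (- p / 3)"
      using exp_ge_add_one_self[of "- p / 3"] by simp
  qed (use p in auto)
  also have "\<dots> = exp (t / 2 - real N * p / 3)"
    by (simp add: exp_of_nat_mult[symmetric] exp_add[symmetric])
  finally show ?thesis .
qed

lemma sum_Pow_insert:
  assumes "finite A" "j \<notin> A"
  shows "(\<Sum>H\<in>Pow (insert j A). f H) = (\<Sum>H\<in>Pow A. f H + f (insert j H))"
proof -
  have "inj_on (insert j) (Pow A)"
    using assms(2) by (auto simp: inj_on_def)
  moreover have "Pow A \<inter> insert j ` Pow A = {}"
    using assms(2) by auto
  ultimately show ?thesis
    using assms(1) by (simp add: Pow_insert sum.union_disjoint sum.reindex sum.distrib)
qed

lemma sum_Pow_binomial_weights:
  assumes "finite A" "p \<in> {0..1}"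
  shows "(\<Sum>H\<in>Pow A. p ^ card H * (1 - p) ^ (card A - card H) * f (card H))
           = measure_pmf.expectation (binomial_pmf (card A) p) f"
proof -
  have "(\<Sum>H\<in>Pow A. p ^ card H * (1 - p) ^ (card A - card H) * f (card H))
        = (\<Sum>k\<le>card A. \<Sum>H\<in>{H \<in> Pow A. card H = k}. p ^ card H * (1 - p) ^ (card A - card H) * f (card H))"
    using assms(1) by (intro sum.group[symmetric]) (auto intro: card_mono)
  also have "\<dots> = (\<Sum>k\<le>card A. real (card A choose k) * p ^ k * (1 - p) ^ (card A - k) * f k)"
  proof (intro sum.cong refl)
    fix k
    have "{H \<in> Pow A. card H = k} = {H. H \<subseteq> A \<and> card H = k}"
      by auto
    then show "(\<Sum>H\<in>{H \<in> Pow A. card H = k}. p ^ card H * (1 - p) ^ (card A - card H) * f (card H))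
               = real (card A choose k) * p ^ k * (1 - p) ^ (card A - k) * f k"
      using n_subsets[OF assms(1), of k] by (simp add: mult_ac)
  qed
  also have "\<dots> = measure_pmf.expectation (binomial_pmf (card A) p) f"
    using assms(2) by (simp add: expectation_binomial_pmf')
  finally show ?thesis .
qed

lemma sum_Pow_binomial_weights_le:
  assumes A: "finite A" and p: "p \<in> {0..1}" and d: "0 \<le> d"
    and le: "\<And>H. H \<subseteq> A \<Longrightarrow> f H \<le> F * g H + d + indicator T (card H)"
  shows "(\<Sum>H\<in>Pow A. p ^ card H * (1 - p) ^ (card A - card H) * f H)
           \<le> F * (\<Sum>H\<in>Pow A. p ^ card H * (1 - p) ^ (card A - card H) * g H)
             + d + measure_pmf.prob (binomial_pmf (card A) p) T"
proof -
  define w where "w H = p ^ card H * (1 - p) ^ (card A - card H)" for H :: "'a set"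
  have "(\<Sum>H\<in>Pow A. w H * f H) \<le> (\<Sum>H\<in>Pow A. w H * (F * g H + d + indicator T (card H)))"
    using p le by (intro sum_mono mult_left_mono) (auto simp: w_def)
  also have "\<dots> = F * (\<Sum>H\<in>Pow A. w H * g H) + d * (\<Sum>H\<in>Pow A. w H * 1)
                  + (\<Sum>H\<in>Pow A. w H * indicator T (card H))"
    by (simp add: algebra_simps sum.distrib sum_distrib_left)
  also have "(\<Sum>H\<in>Pow A. w H * 1) = 1"
    using sum_Pow_binomial_weights[OF A p, of "\<lambda>_. 1"] by (simp add: w_def)
  also have "(\<Sum>H\<in>Pow A. w H * indicator T (card H)) = measure_pmf.prob (binomial_pmf (card A) p) T"
    using sum_Pow_binomial_weights[OF A p, of "indicator T"] by (simp add: w_def)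
  finally show ?thesis
    by (simp add: w_def)
qed

lemma convex_mixture_le:
  fixes c x y d E F :: real
  assumes c: "0 \<le> c" "c \<le> 1/2" and xy: "0 \<le> x" "0 \<le> y" and d: "0 \<le> d" and F: "1 \<le> F"
    and x: "x \<le> E * y + d" and EF: "(1 - c) * E + c \<le> F * (c * E + (1 - c))"
  shows "(1 - c) * x + c * y \<le> F * (c * x + (1 - c) * y) + d"
proof -
  define k where "k = 1 - c - F * c"
  have "(1 - c) * x + c * y - F * (c * x + (1 - c) * y) = k * x + (c - F * (1 - c)) * y"
    by (simp add: k_def algebra_simps)
  moreover have "k * x + (c - F * (1 - c)) * y \<le> d"
  proof (cases "0 \<le> k")
    case True
    have "k * x + (c - F * (1 - c)) * y \<le> k * (E * y + d) + (c - F * (1 - c)) * y"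
      using True x by (simp add: mult_left_mono)
    also have "\<dots> = ((1 - c) * E + c - F * (c * E + (1 - c))) * y + k * d"
      by (simp add: k_def algebra_simps)
    also have "\<dots> \<le> k * d"
      using EF xy(2) by (simp add: mult_nonpos_nonneg)
    also have "\<dots> \<le> d"
    proof (rule mult_left_le_one_le[OF d True])
      have "0 \<le> F * c"
        using c F by simp
      then show "k \<le> 1"
        using c by (simp add: k_def)
    qed
    finally show ?thesis .
  next
    case False
    have "1 - c \<le> F * (1 - c)"
      using mult_right_mono[of 1 F "1 - c"] c F by simp
    then have "c \<le> F * (1 - c)"
      using c by linarith
    then show ?thesis
      using False xy d by (smt (verit) mult_nonpos_nonneg)
  qed
  ultimately show ?thesis
    by linarith
qed

lemma taylor_mixture_condition:
  fixes \<eta> c :: real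
  assumes "0 \<le> \<eta>" "0 \<le> c" "c \<le> 1/2"
  shows "(1 - c) * (1 + \<eta> + \<eta>\<^sup>2 / 2) + c
           \<le> (1 + (1 - 2 * c) * \<eta> + ((1 - 2 * c) * \<eta>)\<^sup>2 / 2) * (c * (1 + \<eta> + \<eta>\<^sup>2 / 2) + (1 - c))"
proof -
  have "(1 + (1 - 2 * c) * \<eta> + ((1 - 2 * c) * \<eta>)\<^sup>2 / 2) * (c * (1 + \<eta> + \<eta>\<^sup>2 / 2) + (1 - c))
        - ((1 - c) * (1 + \<eta> + \<eta>\<^sup>2 / 2) + c)
        = (1 - 2 * c) * (c * \<eta> ^ 3 / 2 + c * (\<eta> + \<eta>\<^sup>2 / 2) * (1 - 2 * c) * \<eta>\<^sup>2 / 2)"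
    by (simp add: field_simps power2_eq_square power3_eq_cube)
  moreover have "0 \<le> (1 - 2 * c) * (c * \<eta> ^ 3 / 2 + c * (\<eta> + \<eta>\<^sup>2 / 2) * (1 - 2 * c) * \<eta>\<^sup>2 / 2)"
    using assms by simp
  ultimately show ?thesis
    by (metis diff_ge_0_iff_ge)
qed

definition shifted_binomial_prob :: "nat \<Rightarrow> nat \<Rightarrow> nat set \<Rightarrow> real" where
  "shifted_binomial_prob h z W = measure_pmf.prob (binomial_pmf h (1/2)) {u. z + u \<in> W}"

lemma shifted_binomial_prob_Suc:
  "shifted_binomial_prob (Suc h) z W = (shifted_binomial_prob h z W + shifted_binomial_prob h (Suc z) W) / 2"
  unfolding shifted_binomial_prob_def by (simp add: measure_binomial_pmf_Suc)

lemma shift_window_bound: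
  fixes L m h :: real
  assumes L: "4/3 \<le> L" and m: "217/25 * L \<le> m" and h: "16/25 * m \<le> h"
  defines "\<eta> \<equiv> sqrt (32 * L / m)"
  shows "h + 1 \<le> (1 + (1 + \<eta> + \<eta>\<^sup>2 / 2)) * (h / 2 - 5/32 * \<eta> * h)"
proof -
  have pos: "0 < m" "0 < h"
    using L m h by linarith+
  then have \<eta>: "0 \<le> \<eta>" "\<eta>\<^sup>2 = 32 * L / m"
    using L by (simp_all add: \<eta>_def)
  have "\<eta>\<^sup>2 \<le> (481/250)\<^sup>2"
    unfolding \<eta>(2) using m pos L by (simp add: field_simps)
  then have \<eta>_le: "\<eta> \<le> 481/250"
    by (rule power2_le_imp_le) simp
  then have "\<eta>\<^sup>2 \<le> 481/250 * \<eta>"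
    using mult_right_mono[OF \<eta>_le \<eta>(1)] by (simp add: power2_eq_square)
  then have poly: "3/40 \<le> 3/16 + 3/32 * \<eta> - 5/64 * \<eta>\<^sup>2"
    using \<eta>_le by linarith
  have "14\<^sup>2 \<le> 256/625 * 32 * (217/25 * L) * L"
    using L mult_mono[OF L L] by (simp add: power2_eq_square)
  also have "\<dots> \<le> 256/625 * 32 * m * L"
    using m L by (intro mult_right_mono) auto
  also have "\<dots> = (16/25 * m)\<^sup>2 * \<eta>\<^sup>2"
    unfolding \<eta>(2) using pos by (simp add: field_simps power2_eq_square)
  also have "\<dots> \<le> h\<^sup>2 * \<eta>\<^sup>2"
    using power_mono[OF h, of 2] pos by (intro mult_right_mono) auto
  also have "\<dots> = (h * \<eta>)\<^sup>2"
    by (simp add: power_mult_distrib)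
  finally have "14 \<le> h * \<eta>"
    by (rule power2_le_imp_le) (use pos \<eta> in simp)
  then have "14 * (3/40) \<le> (h * \<eta>) * (3/16 + 3/32 * \<eta> - 5/64 * \<eta>\<^sup>2)"
    using poly by (intro mult_mono) auto
  moreover have "(1 + (1 + \<eta> + \<eta>\<^sup>2 / 2)) * (h / 2 - 5/32 * \<eta> * h)
                 = h + (h * \<eta>) * (3/16 + 3/32 * \<eta> - 5/64 * \<eta>\<^sup>2)"
    by (simp add: field_simps power2_eq_square)
  ultimately show ?thesis
    by linarith
qed

lemma binomial_half_shift_stable:
  fixes L m :: real
  assumes L: "4/3 \<le> L" and m: "217/25 * L \<le> m" and h: "16/25 * m \<le> real h"
  defines "\<eta> \<equiv> sqrt (32 * L / m)"
  shows "shifted_binomial_prob h z W \<le> (1 + \<eta> + \<eta>\<^sup>2 / 2) * shifted_binomial_prob h (Suc z) W + exp (- L)"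
    and "shifted_binomial_prob h (Suc z) W \<le> (1 + \<eta> + \<eta>\<^sup>2 / 2) * shifted_binomial_prob h z W + exp (- L)"
proof -
  have pos: "0 < m" "0 < h"
    using L m h by linarith+
  then have \<eta>: "0 \<le> \<eta>" "\<eta>\<^sup>2 = 32 * L / m"
    using L by (simp_all add: \<eta>_def)
  \<comment> \<open>Hoeffding at deviation 5/32 * eta * h costs exactly exp (- L) when h = 16/25 * m.\<close>
  have "- 2 * (5/32 * \<eta> * real h)\<^sup>2 / real h = - 25/512 * \<eta>\<^sup>2 * real h"
    using pos by (simp add: field_simps power2_eq_square)
  also have "\<dots> \<le> - 25/512 * \<eta>\<^sup>2 * (16/25 * m)"
    using mult_left_mono[OF h, of "\<eta>\<^sup>2"] by (simp add: mult_ac)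
  also have "\<dots> = - L"
    unfolding \<eta>(2) using pos by simp
  finally have tail: "exp (- 2 * (5/32 * \<eta> * real h)\<^sup>2 / real h) \<le> exp (- L)"
    by simp
  have E: "0 \<le> 1 + \<eta> + \<eta>\<^sup>2 / 2" and \<epsilon>: "0 \<le> 5/32 * \<eta> * real h"
    using pos \<eta>(1) by simp_all
  note window = shift_window_bound[OF L m h, folded \<eta>_def]
  have V: "{u. Suc u \<in> {u. z + u \<in> W}} = {u. Suc z + u \<in> W}"
    by simp
  show "shifted_binomial_prob h z W \<le> (1 + \<eta> + \<eta>\<^sup>2 / 2) * shifted_binomial_prob h (Suc z) W + exp (- L)"
    and "shifted_binomial_prob h (Suc z) W \<le> (1 + \<eta> + \<eta>\<^sup>2 / 2) * shifted_binomial_prob h z W + exp (- L)"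
    using measure_binomial_half_le_shift[OF pos(2) E \<epsilon> window, of "{u. z + u \<in> W}", unfolded V]
      measure_binomial_half_shift_le[OF pos(2) E \<epsilon> window, of "{u. z + u \<in> W}", unfolded V] tail
    unfolding shifted_binomial_prob_def by linarith+
qed

definition ones :: "bool list \<Rightarrow> nat set \<Rightarrow> nat" where
  "ones xs A = (\<Sum>i\<in>A. if xs ! i then 1 else 0)"

lemma measure_C_alg_eq_sum_subsets:
  assumes p: "p = lam / real n" "p \<in> {0..1}"
  shows "measure_pmf.prob (C_alg lam n xs) W =
    (\<Sum>H\<in>Pow {..<n}. p ^ card H * (1 - p) ^ (n - card H) *
       shifted_binomial_prob (card H) (ones xs ({..<n} - H)) W)"
proof -
  define S where "S s = {H. H \<subseteq> {..<n} \<and> card H = s}" for s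
  define g where "g H = shifted_binomial_prob (card H) (ones xs ({..<n} - H)) W" for H
  define M where "M s = pmf_of_set (S s) \<bind> (\<lambda>H. map_pmf (\<lambda>B. ones xs ({..<n} - H) + B) (binomial_pmf s (1/2)))"
    for s
  have C: "C_alg lam n xs = binomial_pmf n p \<bind> M"
    unfolding C_alg_def M_def S_def ones_def map_pmf_def p(1) ..
  have M: "measure_pmf.prob (M s) W = (\<Sum>H\<in>S s. g H) / real (n choose s)" if "s \<le> n" for s
  proof -
    have S: "finite (S s)" "card (S s) = n choose s"
      unfolding S_def using n_subsets[of "{..<n}" s] by (auto intro: finite_subset)
    have "{..<s} \<in> S s"
      using that by (auto simp: S_def)
    then have "measure_pmf.prob (M s) W = (\<Sum>H\<in>S s.
        measure_pmf.prob (map_pmf (\<lambda>B. ones xs ({..<n} - H) + B) (binomial_pmf s (1/2))) W) / card (S s)"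
      unfolding M_def using S by (intro measure_bind_pmf_of_set) auto
    also have "(\<Sum>H\<in>S s. measure_pmf.prob (map_pmf (\<lambda>B. ones xs ({..<n} - H) + B) (binomial_pmf s (1/2))) W)
        = (\<Sum>H\<in>S s. g H)"
      by (intro sum.cong refl) (auto simp: g_def shifted_binomial_prob_def S_def vimage_def)
    finally show ?thesis
      using S by simp
  qed
  have "measure_pmf.prob (C_alg lam n xs) W = (\<Sum>s\<le>n. pmf (binomial_pmf n p) s * measure_pmf.prob (M s) W)"
    unfolding C using p(2) by (intro measure_bind_pmf_finite) (auto simp: set_pmf_binomial_eq)
  also have "\<dots> = (\<Sum>s\<le>n. \<Sum>H\<in>S s. p ^ s * (1 - p) ^ (n - s) * g H)"
  proof (intro sum.cong refl)
    fix s assume "s \<in> {..n}"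
    then have "real (n choose s) \<noteq> 0" and "s \<le> n"
      by simp_all
    then show "pmf (binomial_pmf n p) s * measure_pmf.prob (M s) W = (\<Sum>H\<in>S s. p ^ s * (1 - p) ^ (n - s) * g H)"
      using p(2) by (simp add: M sum_distrib_left sum_divide_distrib mult.assoc)
  qed
  also have "\<dots> = (\<Sum>s\<le>n. \<Sum>H\<in>{H \<in> Pow {..<n}. card H = s}. p ^ card H * (1 - p) ^ (n - card H) * g H)"
    by (intro sum.cong refl) (auto simp: S_def)
  also have "\<dots> = (\<Sum>H\<in>Pow {..<n}. p ^ card H * (1 - p) ^ (n - card H) * g H)"
    by (intro sum.group) (auto dest: card_mono[rotated])
  finally show ?thesis
    unfolding g_def .
qed

lemma measure_C_alg_pivot:
  assumes p: "p = lam / real n" "p \<in> {0..1}" and j: "j < n"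
  defines "A \<equiv> {..<n} - {j}"
  shows "measure_pmf.prob (C_alg lam n xs) W =
    (\<Sum>H\<in>Pow A. p ^ card H * (1 - p) ^ (card A - card H) *
       ((1 - p) * shifted_binomial_prob (card H) (ones xs (A - H) + ones xs {j}) W
        + p * shifted_binomial_prob (Suc (card H)) (ones xs (A - H)) W))"
proof -
  have A: "{..<n} = insert j A" "n = Suc (card A)" "j \<notin> A" "finite A"
    using j by (auto simp: A_def)
  have H: "finite H" "j \<notin> H" "card H \<le> card A" if "H \<in> Pow A" for H
    using that A(3,4) by (auto intro: finite_subset card_mono)
  have ones: "ones xs (insert j A - H) = ones xs (A - H) + ones xs {j}"
    and diff: "insert j A - insert j H = A - H"
    and card: "card (insert j H) = Suc (card H)"
    and exponent: "Suc (card A) - card H = Suc (card A - card H)" if "H \<in> Pow A" for H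
    using H[OF that] A(3,4) by (auto simp: ones_def insert_Diff_if)
  have weights: "x ^ k * y ^ Suc m * a + x ^ Suc k * y ^ m * b = x ^ k * y ^ m * (y * a + x * b)"
    for x y a b :: real and k m
    by (simp add: algebra_simps)
  have "measure_pmf.prob (C_alg lam n xs) W =
    (\<Sum>H\<in>Pow (insert j A). p ^ card H * (1 - p) ^ (Suc (card A) - card H) *
       shifted_binomial_prob (card H) (ones xs (insert j A - H)) W)"
    using measure_C_alg_eq_sum_subsets[OF p, of xs W] unfolding A(1) by (simp only: A(2))
  also have "\<dots> = (\<Sum>H\<in>Pow A. p ^ card H * (1 - p) ^ (card A - card H) *
       ((1 - p) * shifted_binomial_prob (card H) (ones xs (A - H) + ones xs {j}) W
        + p * shifted_binomial_prob (Suc (card H)) (ones xs (A - H)) W))"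
    unfolding sum_Pow_insert[OF A(4,3)]
    by (intro sum.cong refl) (simp only: ones diff card exponent diff_Suc_Suc weights)
  finally show ?thesis .
qed

lemma measure_C_alg_neighbours_mixture:
  fixes n j :: nat and x0 x1 :: "bool list" and W :: "nat set"
  assumes p: "p = lam / real n" "p \<in> {0..1}" and j: "j < n" "\<not> x0 ! j" "x1 ! j"
    and same: "\<forall>i<n. i \<noteq> j \<longrightarrow> x0 ! i = x1 ! i"
  defines "A \<equiv> {..<n} - {j}"
    and "a \<equiv> \<lambda>H. shifted_binomial_prob (card H) (ones x0 ({..<n} - {j} - H)) W"
    and "b \<equiv> \<lambda>H. shifted_binomial_prob (card H) (Suc (ones x0 ({..<n} - {j} - H))) W"
  shows "measure_pmf.prob (C_alg lam n x0) W =
      (\<Sum>H\<in>Pow A. p ^ card H * (1 - p) ^ (card A - card H) * ((1 - p/2) * a H + p/2 * b H))"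
    and "measure_pmf.prob (C_alg lam n x1) W =
      (\<Sum>H\<in>Pow A. p ^ card H * (1 - p) ^ (card A - card H) * (p/2 * a H + (1 - p/2) * b H))"
proof -
  have ones: "ones x1 (A - H) = ones x0 (A - H)" for H
    unfolding ones_def by (intro sum.cong refl) (auto simp: A_def same)
  have ones_j: "ones x0 {j} = 0" "ones x1 {j} = 1"
    using j by (simp_all add: ones_def)
  have mixture: "(1 - p) * x + p * ((x + y) / 2) = (1 - p/2) * x + p/2 * y"
    "(1 - p) * y + p * ((x + y) / 2) = p/2 * x + (1 - p/2) * y" for x y :: real
    by (simp_all add: algebra_simps)
  show "measure_pmf.prob (C_alg lam n x0) W =
      (\<Sum>H\<in>Pow A. p ^ card H * (1 - p) ^ (card A - card H) * ((1 - p/2) * a H + p/2 * b H))"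
    and "measure_pmf.prob (C_alg lam n x1) W =
      (\<Sum>H\<in>Pow A. p ^ card H * (1 - p) ^ (card A - card H) * (p/2 * a H + (1 - p/2) * b H))"
    unfolding measure_C_alg_pivot[OF p j(1), folded A_def] ones ones_j add_0_right Suc_eq_plus1[symmetric]
      shifted_binomial_prob_Suc mixture a_def b_def A_def[symmetric]
    by (rule refl)+
qed

lemma measure_C_alg_neighbour_le:
  assumes p: "p = lam / real n" "p \<in> {0..1}" and j: "j < n" "\<not> x0 ! j" "x1 ! j"
    and same: "\<forall>i<n. i \<noteq> j \<longrightarrow> x0 ! i = x1 ! i"
    and F: "1 \<le> F" and EF: "(1 - p/2) * E + p/2 \<le> F * (p/2 * E + (1 - p/2))" and d: "0 \<le> d"
    and stable: "\<And>h z W. t \<le> real h \<Longrightarrow>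
       shifted_binomial_prob h z W \<le> E * shifted_binomial_prob h (Suc z) W + d \<and>
       shifted_binomial_prob h (Suc z) W \<le> E * shifted_binomial_prob h z W + d"
  shows "measure_pmf.prob (C_alg lam n x0) W \<le> F * measure_pmf.prob (C_alg lam n x1) W + d
           + measure_pmf.prob (binomial_pmf (n - 1) p) {k. real k < t}"
    and "measure_pmf.prob (C_alg lam n x1) W \<le> F * measure_pmf.prob (C_alg lam n x0) W + d
           + measure_pmf.prob (binomial_pmf (n - 1) p) {k. real k < t}"
proof -
  define A where "A = {..<n} - {j}"
  let ?a = "\<lambda>H. shifted_binomial_prob (card H) (ones x0 (A - H)) W"
  let ?b = "\<lambda>H. shifted_binomial_prob (card H) (Suc (ones x0 (A - H))) W"
  let ?T = "{k. real k < t}"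
  note P = measure_C_alg_neighbours_mixture[OF p j same, of W, folded A_def]
  have A: "finite A" "card A = n - 1"
    using j by (auto simp: A_def)
  have c: "0 \<le> p/2" "p/2 \<le> 1/2"
    using p(2) by auto
  have mix: "(1 - p/2) * x + p/2 * y \<le> F * (p/2 * x + (1 - p/2) * y) + d + indicator ?T (card H)"
    if "x \<le> E * y + d \<or> t > real (card H)" "x \<in> {0..1}" "y \<in> {0..1}" for H :: "nat set" and x y
  proof (cases "t \<le> real (card H)")
    case True
    then show ?thesis
      using convex_mixture_le[OF c _ _ d F _ EF] that by simp
  next
    case False
    have "(1 - p/2) * x + p/2 * y \<le> (1 - p/2) * 1 + p/2 * 1"
      using that c by (intro add_mono mult_left_mono) auto
    moreover have "0 \<le> F * (p/2 * x + (1 - p/2) * y)"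
      using that c F by simp
    ultimately show ?thesis
      using False d by simp
  qed
  have ab: "?a H \<in> {0..1}" "?b H \<in> {0..1}" for H
    by (simp_all add: shifted_binomial_prob_def)
  have "?a H \<le> E * ?b H + d \<or> t > real (card H)" "?b H \<le> E * ?a H + d \<or> t > real (card H)" for H
    using stable[of "card H" "ones x0 (A - H)" W] by auto
  then have le0: "(1 - p/2) * ?a H + p/2 * ?b H \<le> F * (p/2 * ?a H + (1 - p/2) * ?b H) + d + indicator ?T (card H)"
    and le1: "p/2 * ?a H + (1 - p/2) * ?b H \<le> F * ((1 - p/2) * ?a H + p/2 * ?b H) + d + indicator ?T (card H)"
    for H
    using mix[OF _ ab(1,2)] mix[OF _ ab(2,1)] by (auto simp only: add.commute)
  show "measure_pmf.prob (C_alg lam n x0) W \<le> F * measure_pmf.prob (C_alg lam n x1) W + d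
           + measure_pmf.prob (binomial_pmf (n - 1) p) ?T"
    unfolding P A(2)[symmetric] by (rule sum_Pow_binomial_weights_le[OF A(1) p(2) d le0])
  show "measure_pmf.prob (C_alg lam n x1) W \<le> F * measure_pmf.prob (C_alg lam n x0) W + d
           + measure_pmf.prob (binomial_pmf (n - 1) p) ?T"
    unfolding P A(2)[symmetric] by (rule sum_Pow_binomial_weights_le[OF A(1) p(2) d le1])
qed

lemma differentially_private_mono:
  assumes "differentially_private n M eps d" "d \<le> d'"
  shows "differentially_private n M eps d'"
  using assms unfolding differentially_private_def by (meson add_left_mono order_trans)

lemma differentially_private_trivial:
  assumes "1 \<le> d"
  shows "differentially_private n M eps d"
  unfolding differentially_private_def
proof (intro allI impI)
  fix xs ys :: "bool list" and W
  have "measure_pmf.prob (M xs) W \<le> 1"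
    by simp
  also have "1 \<le> exp eps * measure_pmf.prob (M ys) W + d"
    using assms by (simp add: add_increasing)
  finally show "measure_pmf.prob (M xs) W \<le> exp eps * measure_pmf.prob (M ys) W + d" .
qed

lemma C_alg_differentially_private:
  assumes p: "p = lam / real n" "p \<in> {0..1}" and F: "1 \<le> F" "F \<le> exp eps"
    and EF: "(1 - p/2) * E + p/2 \<le> F * (p/2 * E + (1 - p/2))" and d: "0 \<le> d"
    and stable: "\<And>h z W. t \<le> real h \<Longrightarrow>
       shifted_binomial_prob h z W \<le> E * shifted_binomial_prob h (Suc z) W + d \<and>
       shifted_binomial_prob h (Suc z) W \<le> E * shifted_binomial_prob h z W + d"
  shows "differentially_private n (C_alg lam n) eps
           (d + measure_pmf.prob (binomial_pmf (n - 1) p) {k. real k < t})"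
  unfolding differentially_private_def
proof (intro allI impI)
  fix xs ys :: "bool list" and W :: "nat set"
  assume "neighbours n xs ys"
  then have "card {i. i < n \<and> xs ! i \<noteq> ys ! i} = 1"
    by (simp add: neighbours_def)
  then obtain j where j: "{i. i < n \<and> xs ! i \<noteq> ys ! i} = {j}"
    by (rule card_1_singletonE)
  then have j_diff: "j < n" "xs ! j \<noteq> ys ! j"
    and same: "\<forall>i<n. i \<noteq> j \<longrightarrow> xs ! i = ys ! i" "\<forall>i<n. i \<noteq> j \<longrightarrow> ys ! i = xs ! i"
    by auto
  have "measure_pmf.prob (C_alg lam n xs) W \<le> F * measure_pmf.prob (C_alg lam n ys) W
          + d + measure_pmf.prob (binomial_pmf (n - 1) p) {k. real k < t}"
  proof (cases "xs ! j")
    case True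
    with j_diff(2) have "\<not> ys ! j"
      by simp
    from this True show ?thesis
      by (rule measure_C_alg_neighbour_le(2)[where t = t, OF p j_diff(1) _ _ same(2) F(1) EF d stable])
  next
    case False
    with j_diff(2) have "ys ! j"
      by simp
    with False show ?thesis
      by (rule measure_C_alg_neighbour_le(1)[where t = t, OF p j_diff(1) _ _ same(1) F(1) EF d stable])
  qed
  also have "F * measure_pmf.prob (C_alg lam n ys) W \<le> exp eps * measure_pmf.prob (C_alg lam n ys) W"
    using F(2) by (simp add: mult_right_mono)
  finally show "measure_pmf.prob (C_alg lam n xs) W \<le> exp eps * measure_pmf.prob (C_alg lam n ys) W
          + (d + measure_pmf.prob (binomial_pmf (n - 1) p) {k. real k < t})"
    by (simp add: add.assoc)
qed

lemma C_alg_differentially_private_threshold: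
  fixes L m lam :: real and n :: nat
  assumes L: "4/3 \<le> L" and m: "217/25 * L \<le> m" "m \<le> lam" "8/25 * m \<le> (lam - 1) / 3 - L"
    and n: "lam \<le> real n"
  shows "differentially_private n (C_alg lam n) (sqrt (32 * L / m) * (1 - m / real n)) (2 * exp (- L))"
proof -
  define \<eta> where "\<eta> = sqrt (32 * L / m)"
  define p where "p = lam / real n"
  define F where "F = 1 + (1 - p) * \<eta> + ((1 - p) * \<eta>)\<^sup>2 / 2"
  have pos: "0 < m" "0 < lam" "0 < real n"
    using L m n by linarith+
  then have p: "p \<in> {0..1}" "m / real n \<le> p"
    using m(2) n by (auto simp: p_def divide_right_mono)
  have \<eta>: "0 \<le> \<eta>"
    using L pos by (simp add: \<eta>_def)
  have "F \<le> exp ((1 - p) * \<eta>)"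
    unfolding F_def using p \<eta> by (intro exp_lower_Taylor_quadratic) simp
  also have "\<dots> \<le> exp (\<eta> * (1 - m / real n))"
    using p \<eta> by (simp add: mult_left_mono mult.commute)
  finally have F: "1 \<le> F" "F \<le> exp (\<eta> * (1 - m / real n))"
    using p \<eta> by (simp_all add: F_def)
  have EF: "(1 - p/2) * (1 + \<eta> + \<eta>\<^sup>2 / 2) + p/2 \<le> F * (p/2 * (1 + \<eta> + \<eta>\<^sup>2 / 2) + (1 - p/2))"
    using taylor_mixture_condition[OF \<eta>, of "p/2"] p by (simp add: F_def)
  have "measure_pmf.prob (binomial_pmf (n - 1) p) {k. real k < 16/25 * m}
        \<le> exp (16/25 * m / 2 - real (n - 1) * p / 3)"
    using p pos by (intro measure_binomial_pmf_lower_tail) auto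
  also have "\<dots> \<le> exp (- L)"
  proof -
    have "real (n - 1) * p = lam - p"
      using pos by (simp add: p_def field_simps)
    moreover have "p \<le> 1"
      using p(1) by simp
    ultimately have "16/25 * m / 2 - real (n - 1) * p / 3 \<le> - L"
      using m(3) by argo
    then show ?thesis
      by simp
  qed
  finally have tail: "measure_pmf.prob (binomial_pmf (n - 1) p) {k. real k < 16/25 * m} \<le> exp (- L)" .
  have "differentially_private n (C_alg lam n) (\<eta> * (1 - m / real n))
          (exp (- L) + measure_pmf.prob (binomial_pmf (n - 1) p) {k. real k < 16/25 * m})"
    using binomial_half_shift_stable[OF L m(1), folded \<eta>_def]
    by (intro C_alg_differentially_private[OF p_def p(1) F EF]) simp_all
  then show ?thesis
    unfolding \<eta>_def by (rule differentially_private_mono) (use tail in simp)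
qed

lemma ln_four_div_bounds:
  fixes del :: real
  assumes "0 < del" "del < 1"
  shows "4/3 \<le> ln (4 / del)" "ln (4 / del) / 2 \<le> ln (2 / del)" "ln (2 / del) \<le> ln (4 / del)"
proof -
  have "ln (4 / del) = ln 2 + ln (2 / del)"
    using assms ln_mult[of 2 "2 / del"] by simp
  moreover have "ln 2 \<le> ln (2 / del)"
    using assms by (simp add: field_simps)
  ultimately show "4/3 \<le> ln (4 / del)" "ln (4 / del) / 2 \<le> ln (2 / del)" "ln (2 / del) \<le> ln (4 / del)"
    using ln2_ge_two_thirds by linarith+
qed

lemma chernoff_threshold_bounds:
  fixes del lam :: real
  assumes del: "0 < del" "del < 1" and lam: "14 * ln (4 / del) \<le> lam"
  defines "m \<equiv> lam - sqrt (2 * lam * ln (2 / del))"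
  shows "217/25 * ln (4 / del) \<le> m" "m \<le> lam" "8/25 * m \<le> (lam - 1) / 3 - ln (4 / del)"
proof -
  define L where "L = ln (4 / del)"
  define S where "S = sqrt (2 * lam * ln (2 / del))"
  have L: "4/3 \<le> L" "L / 2 \<le> ln (2 / del)" "ln (2 / del) \<le> L" "14 * L \<le> lam"
    using ln_four_div_bounds[OF del] lam by (simp_all add: L_def)
  then have lam_pos: "0 < lam"
    by linarith
  have S: "0 \<le> S" "S\<^sup>2 = 2 * lam * ln (2 / del)"
    using lam_pos L by (simp_all add: S_def)
  have "S \<le> 19/50 * lam"
  proof (rule power2_le_imp_le)
    have "S\<^sup>2 \<le> 2 * lam * L"
      using S(2) L lam_pos by simp
    also have "\<dots> \<le> lam * lam / 7"
      using L lam_pos by (simp add: field_simps)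
    also have "\<dots> \<le> (19/50 * lam)\<^sup>2"
      using zero_le_square[of lam] by (simp add: power2_eq_square; linarith)
    finally show "S\<^sup>2 \<le> (19/50 * lam)\<^sup>2" .
  qed (use lam_pos in simp)
  moreover have "187/50 * L \<le> S"
  proof (rule power2_le_imp_le)
    have "(187/50 * L)\<^sup>2 \<le> 14 * L * L"
      using L by (simp add: power2_eq_square)
    also have "\<dots> \<le> lam * L"
      using L by (intro mult_right_mono) auto
    also have "\<dots> \<le> S\<^sup>2"
      using S(2) L lam_pos by (simp add: field_simps)
    finally show "(187/50 * L)\<^sup>2 \<le> S\<^sup>2" .
  qed (use S in simp)
  ultimately show "217/25 * ln (4 / del) \<le> m" "m \<le> lam" "8/25 * m \<le> (lam - 1) / 3 - ln (4 / del)"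
    using L S(1) unfolding m_def L_def[symmetric] S_def[symmetric] by argo+
qed

theorem claim4p6:
  fixes del lam :: real and n :: nat
  assumes "del > 0"
    and "lam \<ge> 14 * ln (4 / del)"
    and "real n \<ge> lam"
  shows "differentially_private n (C_alg lam n)
           (sqrt (32 * ln (4 / del) / (lam - sqrt (2 * lam * ln (2 / del))))
              * (1 - (lam - sqrt (2 * lam * ln (2 / del))) / real n))
           del"
proof (cases "1 \<le> del")
  case True
  then show ?thesis
    by (rule differentially_private_trivial)
next
  case False
  then have del: "0 < del" "del < 1"
    using assms(1) by simp_all
  note bounds = ln_four_div_bounds(1)[OF del] chernoff_threshold_bounds[OF del assms(2)]
  have "differentially_private n (C_alg lam n)
          (sqrt (32 * ln (4 / del) / (lam - sqrt (2 * lam * ln (2 / del))))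
             * (1 - (lam - sqrt (2 * lam * ln (2 / del))) / real n))
          (2 * exp (- ln (4 / del)))"
    by (intro C_alg_differentially_private_threshold bounds assms(3))
  moreover have "2 * exp (- ln (4 / del)) \<le> del"
    using assms(1) by (simp add: exp_minus)
  ultimately show ?thesis
    by (rule differentially_private_mono)
qed

end
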